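(* Fix $\gamma\in\mathbb{R}$ and let $\theta^1,\theta^2\in[0,\infty)^{s_0}$ be such that $\Gamma_{\theta^1}^+\cap\Gamma_{\theta^2}^-=\emptyset$ or $\Gamma_{\theta^1}^-\cap\Gamma_{\theta^2}^+=\emptyset$, and let $c_1,c_2>0$. (i) If Condition 3.2 holds at $\gamma$ for $\theta^1$ and for $\theta^2$, then it holds at $\gamma$ for $c_1\theta^1+c_2\theta^2$. (ii) If the balance equation (B) holds for $\theta^1$ and for $\theta^2$, then (B) holds for $c_1\theta^1+c_2\theta^2$.
   Context: Fix integers $s_0,r_0\ge 1$ and, for $k=1,\dots,r_0$, vectors $\nu_k,\nu_k'\in\mathbb{N}^{s_0}$ (reactant and product vectors of reaction $k$); set $\zeta_k=\nu_k'-\nu_k$. Fix $\alpha\in[0,\infty)^{s_0}$ and $\beta\in\mathbb{R}^{r_0}$ and set $\rho_k=\beta_k+\nu_k\cdot\alpha$. For $\theta\in[0,\infty)^{s_0}$ let $\Gamma_\theta^+=\{k:\theta\cdot\zeta_k>0\}$, $\Gamma_\theta^-=\{k:\theta\cdot\zeta_k<0\}$ and $\mathrm{supp}(\theta)=\{i:\theta_i>0\}$. A maximum over the empty set is $-\infty$. For $\theta\in[0,\infty)^{s_0}$ and $\gamma\in\mathbb{R}$: the balance equation for $\theta$ is (B) $\max_{k\in\Gamma_\theta^-}\rho_k=\max_{k\in\Gamma_\theta^+}\rho_k$; the time-scale constraint for $\theta$ at $\gamma$ is (T) $\gamma\le\max_{i:\theta_i>0}\alpha_i-\max_{k\in\Gamma_\theta^+\cup\Gamma_\theta^-}\rho_k$;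 Condition 3.2 holds for $\theta$ at $\gamma$ if (B) or (T) holds. *)

theory Defs
  imports "HOL-Analysis.Analysis" "HOL-Library.Extended_Real"
begin

text \<open>Species are indexed by 0..<s0, reactions by 0..<r0.
  nu k i, nu' k i: reactant/product stoichiometry of species i in reaction k.
  Vectors in [0,inf)^s0 are functions nat => real restricted to {0..<s0}.
  Maxima are taken in the extended reals, so that the max over the empty set is -inf.\<close>

definition zeta :: "(nat \<Rightarrow> nat \<Rightarrow> nat) \<Rightarrow> (nat \<Rightarrow> nat \<Rightarrow> nat) \<Rightarrow> nat \<Rightarrow> nat \<Rightarrow> real" where
  "zeta nu nu' k i = real (nu' k i) - real (nu k i)"

definition dotp :: "nat \<Rightarrow> (nat \<Rightarrow> real) \<Rightarrow> (nat \<Rightarrow> real) \<Rightarrow> real" where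
  "dotp s0 x y = (\<Sum>i<s0. x i * y i)"

definition rho :: "nat \<Rightarrow> (nat \<Rightarrow> nat \<Rightarrow> nat) \<Rightarrow> (nat \<Rightarrow> real) \<Rightarrow> (nat \<Rightarrow> real) \<Rightarrow> nat \<Rightarrow> real" where
  "rho s0 nu alpha beta k = beta k + dotp s0 (\<lambda>i. real (nu k i)) alpha"

definition GammaP :: "nat \<Rightarrow> nat \<Rightarrow> (nat \<Rightarrow> nat \<Rightarrow> nat) \<Rightarrow> (nat \<Rightarrow> nat \<Rightarrow> nat) \<Rightarrow> (nat \<Rightarrow> real) \<Rightarrow> nat set" where
  "GammaP s0 r0 nu nu' \<theta> = {k. k < r0 \<and> dotp s0 \<theta> (zeta nu nu' k) > 0}"

definition GammaM :: "nat \<Rightarrow> nat \<Rightarrow> (nat \<Rightarrow> nat \<Rightarrow> nat) \<Rightarrow> (nat \<Rightarrow> nat \<Rightarrow> nat) \<Rightarrow> (nat \<Rightarrow> real) \<Rightarrow> nat set" where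
  "GammaM s0 r0 nu nu' \<theta> = {k. k < r0 \<and> dotp s0 \<theta> (zeta nu nu' k) < 0}"

definition supp :: "nat \<Rightarrow> (nat \<Rightarrow> real) \<Rightarrow> nat set" where
  "supp s0 \<theta> = {i. i < s0 \<and> \<theta> i > 0}"

definition emax :: "'a set \<Rightarrow> ('a \<Rightarrow> real) \<Rightarrow> ereal" where
  "emax S f = Sup ((\<lambda>x. ereal (f x)) ` S)"

definition balance :: "nat \<Rightarrow> nat \<Rightarrow> (nat \<Rightarrow> nat \<Rightarrow> nat) \<Rightarrow> (nat \<Rightarrow> nat \<Rightarrow> nat) \<Rightarrow>
    (nat \<Rightarrow> real) \<Rightarrow> (nat \<Rightarrow> real) \<Rightarrow> (nat \<Rightarrow> real) \<Rightarrow> bool" where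
  "balance s0 r0 nu nu' alpha beta \<theta> \<longleftrightarrow>
     emax (GammaM s0 r0 nu nu' \<theta>) (rho s0 nu alpha beta)
   = emax (GammaP s0 r0 nu nu' \<theta>) (rho s0 nu alpha beta)"

definition timescale :: "nat \<Rightarrow> nat \<Rightarrow> (nat \<Rightarrow> nat \<Rightarrow> nat) \<Rightarrow> (nat \<Rightarrow> nat \<Rightarrow> nat) \<Rightarrow>
    (nat \<Rightarrow> real) \<Rightarrow> (nat \<Rightarrow> real) \<Rightarrow> (nat \<Rightarrow> real) \<Rightarrow> real \<Rightarrow> bool" where
  "timescale s0 r0 nu nu' alpha beta \<theta> \<gamma> \<longleftrightarrow>
     ereal \<gamma> \<le> emax (supp s0 \<theta>) alpha
       - emax (GammaP s0 r0 nu nu' \<theta> \<union> GammaM s0 r0 nu nu' \<theta>) (rho s0 nu alpha beta)"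

definition cond32 :: "nat \<Rightarrow> nat \<Rightarrow> (nat \<Rightarrow> nat \<Rightarrow> nat) \<Rightarrow> (nat \<Rightarrow> nat \<Rightarrow> nat) \<Rightarrow>
    (nat \<Rightarrow> real) \<Rightarrow> (nat \<Rightarrow> real) \<Rightarrow> (nat \<Rightarrow> real) \<Rightarrow> real \<Rightarrow> bool" where
  "cond32 s0 r0 nu nu' alpha beta \<theta> \<gamma> \<longleftrightarrow>
     balance s0 r0 nu nu' alpha beta \<theta> \<or> timescale s0 r0 nu nu' alpha beta \<theta> \<gamma>"

end

theory Submission
  imports Defs
begin

(* For a direction theta write x(k) = theta . zeta_k.  Then the reaction sets
   Gamma^+/Gamma^- of theta are the positive/negative sets of the real vector x on {..<r0},
   and the direction c1*theta1 + c2*theta2 has drift vector x1 + x2 with x_i = c_i * theta_i . zeta.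
   Since scaling by c > 0 does not change sign sets, everything reduces to statements about
   sums of two real vectors x, y on an index set R with a weight f (here rho):
   - balanced_add: if pos x and neg y are disjoint (or neg x and pos y), balance of x and
     of y gives balance of x + y; every index of pos y that leaves pos(x+y) is pushed into
     neg x, whose weight is controlled by the balance of x (and symmetrically).
   - active_sum_or_balanced: if y is balanced, then either the maximal weight over the
     reactions moved by x + y is at most that over the reactions moved by x, or x + y is
     balanced; the maximum outside the reactions moved by x comes from y alone.
   - cond_add combines the two into the abstract form of Condition 3.2.
   The theorem then follows by unfolding the network notions into this abstract setting. *)

lemma emax_upper: "k \<in> S \<Longrightarrow> ereal (f k) \<le> emax S f"
  unfolding emax_def by (rule SUP_upper)

lemma emax_le: "(\<And>k. k \<in> S \<Longrightarrow> ereal (f k) \<le> a) \<Longrightarrow> emax S f \<le> a"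
  unfolding emax_def by (rule SUP_least)

lemma emax_mono: "S \<subseteq> T \<Longrightarrow> emax S f \<le> emax T f"
  unfolding emax_def by (rule SUP_subset_mono) auto

lemma emax_Un: "emax (S \<union> T) f = max (emax S f) (emax T f)"
  unfolding emax_def by (simp add: SUP_union sup_max)

lemma emax_outside:
  assumes "emax (S \<inter> T) f \<le> a" and "a < emax S f"
  shows "emax S f = emax (S - T) f"
proof -
  have "emax S f = max (emax (S \<inter> T) f) (emax (S - T) f)"
    by (metis Int_Diff_Un emax_Un)
  with assms show ?thesis by (auto simp: max_def)
qed

definition posset :: "'a set \<Rightarrow> ('a \<Rightarrow> real) \<Rightarrow> 'a set" where
  "posset R x = {k \<in> R. 0 < x k}"

definition negset :: "'a set \<Rightarrow> ('a \<Rightarrow> real) \<Rightarrow> 'a set" where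
  "negset R x = {k \<in> R. x k < 0}"

definition balanced :: "'a set \<Rightarrow> ('a \<Rightarrow> real) \<Rightarrow> ('a \<Rightarrow> real) \<Rightarrow> bool" where
  "balanced R f x \<longleftrightarrow> emax (negset R x) f = emax (posset R x) f"

text \<open>Abstract Condition 3.2 for a drift vector \<open>x\<close> whose support carries maximal weight \<open>s\<close>.\<close>
definition cond_at :: "'a set \<Rightarrow> ('a \<Rightarrow> real) \<Rightarrow> real \<Rightarrow> ereal \<Rightarrow> ('a \<Rightarrow> real) \<Rightarrow> bool" where
  "cond_at R f \<gamma> s x \<longleftrightarrow> balanced R f x \<or> ereal \<gamma> \<le> s - emax (posset R x \<union> negset R x) f"

lemma posset_scale: "c > 0 \<Longrightarrow> posset R (\<lambda>k. c * x k) = posset R x"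
  by (auto simp: posset_def zero_less_mult_iff)

lemma negset_scale: "c > 0 \<Longrightarrow> negset R (\<lambda>k. c * x k) = negset R x"
  by (auto simp: negset_def mult_less_0_iff)

lemma balanced_scale: "c > 0 \<Longrightarrow> balanced R f (\<lambda>k. c * x k) \<longleftrightarrow> balanced R f x"
  by (simp add: balanced_def posset_scale negset_scale)

lemma cond_at_scale: "c > 0 \<Longrightarrow> cond_at R f \<gamma> s (\<lambda>k. c * x k) \<longleftrightarrow> cond_at R f \<gamma> s x"
  by (simp add: cond_at_def balanced_scale posset_scale negset_scale)

lemma balanced_add_disjoint:
  assumes disj: "posset R x \<inter> negset R y = {}"
    and bal_x: "balanced R f x" and bal_y: "balanced R f y"
  shows "balanced R f (\<lambda>k. x k + y k)"
proof -
  let ?P = "posset R (\<lambda>k. x k + y k)" and ?M = "negset R (\<lambda>k. x k + y k)"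
  define m where "m = max (emax (posset R x) f) (emax (posset R y) f)"
  have m_neg: "m = max (emax (negset R x) f) (emax (negset R y) f)"
    using bal_x bal_y by (simp add: m_def balanced_def)
  have Px: "posset R x \<subseteq> ?P" and Ny: "negset R y \<subseteq> ?M"
    using disj by (force simp: posset_def negset_def)+
  have "emax ?P f \<le> m"
  proof -
    have "?P \<subseteq> posset R x \<union> posset R y" by (auto simp: posset_def)
    then show ?thesis unfolding m_def by (metis emax_mono emax_Un)
  qed
  moreover have "emax ?M f \<le> m"
  proof -
    have "?M \<subseteq> negset R x \<union> negset R y" by (auto simp: negset_def)
    then show ?thesis unfolding m_neg by (metis emax_mono emax_Un)
  qed
  moreover have "emax (posset R y) f \<le> emax ?P f"
  proof (rule emax_le)
    fix k assume k: "k \<in> posset R y"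
    show "ereal (f k) \<le> emax ?P f"
    proof (cases "k \<in> ?P")
      case False
      then have "k \<in> negset R x" using k by (auto simp: posset_def negset_def)
      then have "ereal (f k) \<le> emax (posset R x) f"
        using bal_x emax_upper unfolding balanced_def by metis
      then show ?thesis using emax_mono[OF Px] by (rule order_trans)
    qed (rule emax_upper)
  qed
  moreover have "emax (negset R x) f \<le> emax ?M f"
  proof (rule emax_le)
    fix k assume k: "k \<in> negset R x"
    show "ereal (f k) \<le> emax ?M f"
    proof (cases "k \<in> ?M")
      case False
      then have "k \<in> posset R y" using k by (auto simp: posset_def negset_def)
      then have "ereal (f k) \<le> emax (negset R y) f"
        using bal_y emax_upper unfolding balanced_def by metis
      then show ?thesis using emax_mono[OF Ny] by (rule order_trans)
    qed (rule emax_upper)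
  qed
  moreover have "emax (posset R x) f \<le> emax ?P f" "emax (negset R y) f \<le> emax ?M f"
    using Px Ny by (simp_all add: emax_mono)
  ultimately have "emax ?P f = m" "emax ?M f = m"
    using m_def m_neg by (metis antisym max.bounded_iff)+
  then show ?thesis by (simp add: balanced_def)
qed

lemma balanced_add:
  assumes "posset R x \<inter> negset R y = {} \<or> negset R x \<inter> posset R y = {}"
    and "balanced R f x" and "balanced R f y"
  shows "balanced R f (\<lambda>k. x k + y k)"
  using assms balanced_add_disjoint[of R y x f] balanced_add_disjoint[of R x y f]
  by (auto simp: add.commute Int_commute)

text \<open>Adding a balanced vector \<open>y\<close> to \<open>x\<close> either does not raise the maximal weight of the
  moving indices, or yields a balanced sum: outside the indices moved by \<open>x\<close>, the sum moves
  exactly like \<open>y\<close>.\<close>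
lemma active_sum_or_balanced:
  assumes bal_y: "balanced R f y"
  shows "emax (posset R (\<lambda>k. x k + y k) \<union> negset R (\<lambda>k. x k + y k)) f
           \<le> emax (posset R x \<union> negset R x) f
         \<or> balanced R f (\<lambda>k. x k + y k)"
proof -
  let ?P = "posset R (\<lambda>k. x k + y k)" and ?M = "negset R (\<lambda>k. x k + y k)"
  let ?A = "posset R x \<union> negset R x" and ?a = "emax (posset R x \<union> negset R x) f"
  define m where "m = emax (?P \<union> ?M) f"
  have "balanced R f (\<lambda>k. x k + y k)" if a_m: "?a < m"
  proof -
    have "m = emax ((?P \<union> ?M) - ?A) f"
      unfolding m_def using a_m emax_mono[of "(?P \<union> ?M) \<inter> ?A" ?A f]
      by (intro emax_outside) (auto simp: m_def)
    also have "\<dots> \<le> emax (posset R y \<union> negset R y) f"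
      by (rule emax_mono) (auto simp: posset_def negset_def)
    finally have m_y: "m \<le> emax (posset R y) f" "m \<le> emax (negset R y) f"
      using bal_y by (simp_all add: emax_Un balanced_def)
    have "m \<le> emax ?P f"
    proof -
      have "emax (posset R y) f = emax (posset R y - ?A) f"
        using a_m m_y emax_mono[of "posset R y \<inter> ?A" ?A f]
        by (intro emax_outside) auto
      also have "\<dots> \<le> emax ?P f"
        by (rule emax_mono) (auto simp: posset_def negset_def)
      finally show ?thesis using m_y by simp
    qed
    moreover have "m \<le> emax ?M f"
    proof -
      have "emax (negset R y) f = emax (negset R y - ?A) f"
        using a_m m_y emax_mono[of "negset R y \<inter> ?A" ?A f]
        by (intro emax_outside) auto
      also have "\<dots> \<le> emax ?M f"
        by (rule emax_mono) (auto simp: posset_def negset_def)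
      finally show ?thesis using m_y by simp
    qed
    moreover have "emax ?P f \<le> m" "emax ?M f \<le> m"
      unfolding m_def by (simp_all add: emax_Un)
    ultimately show ?thesis by (simp add: balanced_def)
  qed
  then show ?thesis unfolding m_def by (meson not_le)
qed

lemma timescale_mono:
  assumes "ereal g \<le> a1 - r1" "a1 \<le> a" "r \<le> r1"
  shows "ereal g \<le> a - r"
  using assms(1) ereal_minus_mono[OF assms(2) assms(3)] by (rule order_trans)

lemma cond_add:
  assumes disj: "posset R x \<inter> negset R y = {} \<or> negset R x \<inter> posset R y = {}"
    and cx: "cond_at R f \<gamma> s1 x" and cy: "cond_at R f \<gamma> s2 y"
    and s1: "s1 \<le> s" and s2: "s2 \<le> s"
  shows "cond_at R f \<gamma> s (\<lambda>k. x k + y k)"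
proof -
  let ?act = "\<lambda>z. emax (posset R z \<union> negset R z) f"
  let ?xy = "\<lambda>k. x k + y k"
  have sum_le: "?act ?xy \<le> max (?act x) (?act y)"
    by (rule order_trans[OF emax_mono emax_Un[THEN eq_refl]])
       (auto simp: posset_def negset_def)
  consider "balanced R f x" "balanced R f y"
    | "balanced R f x" "ereal \<gamma> \<le> s2 - ?act y"
    | "ereal \<gamma> \<le> s1 - ?act x" "balanced R f y"
    | "ereal \<gamma> \<le> s1 - ?act x" "ereal \<gamma> \<le> s2 - ?act y"
    using cx cy unfolding cond_at_def by blast
  then show ?thesis
  proof cases
    case 1
    then show ?thesis using balanced_add[OF disj] by (simp add: cond_at_def)
  next
    case 2
    then show ?thesis
      using active_sum_or_balanced[of R f x y] timescale_mono[OF _ s2]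
      by (auto simp: cond_at_def add.commute)
  next
    case 3
    then show ?thesis
      using active_sum_or_balanced[of R f y x] timescale_mono[OF _ s1]
      by (auto simp: cond_at_def)
  next
    case 4
    then show ?thesis
      using sum_le timescale_mono[OF _ s1] timescale_mono[OF _ s2]
      by (auto simp: cond_at_def max_def split: if_splits)
  qed
qed

section \<open>Translation to reaction networks\<close>

definition drifts :: "nat \<Rightarrow> (nat \<Rightarrow> nat \<Rightarrow> nat) \<Rightarrow> (nat \<Rightarrow> nat \<Rightarrow> nat) \<Rightarrow> (nat \<Rightarrow> real)
    \<Rightarrow> nat \<Rightarrow> real" where
  "drifts s0 nu nu' \<theta> k = dotp s0 \<theta> (zeta nu nu' k)"

lemma GammaP_posset: "GammaP s0 r0 nu nu' \<theta> = posset {..<r0} (drifts s0 nu nu' \<theta>)"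
  by (auto simp: GammaP_def posset_def drifts_def)

lemma GammaM_negset: "GammaM s0 r0 nu nu' \<theta> = negset {..<r0} (drifts s0 nu nu' \<theta>)"
  by (auto simp: GammaM_def negset_def drifts_def)

lemma balance_balanced:
  "balance s0 r0 nu nu' alpha beta \<theta>
     \<longleftrightarrow> balanced {..<r0} (rho s0 nu alpha beta) (drifts s0 nu nu' \<theta>)"
  by (simp add: balance_def balanced_def GammaP_posset GammaM_negset)

lemma cond32_cond_at:
  "cond32 s0 r0 nu nu' alpha beta \<theta> \<gamma>
     \<longleftrightarrow> cond_at {..<r0} (rho s0 nu alpha beta) \<gamma> (emax (supp s0 \<theta>) alpha) (drifts s0 nu nu' \<theta>)"
  by (simp add: cond32_def timescale_def cond_at_def balance_balanced GammaP_posset GammaM_negset)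

lemma drifts_comb:
  "drifts s0 nu nu' (\<lambda>i. c1 * t1 i + c2 * t2 i)
     = (\<lambda>k. c1 * drifts s0 nu nu' t1 k + c2 * drifts s0 nu nu' t2 k)"
  by (simp add: fun_eq_iff drifts_def dotp_def sum.distrib sum_distrib_left algebra_simps)

lemma supp_comb:
  assumes "\<forall>i<s0. t1 i \<ge> 0" "\<forall>i<s0. t2 i \<ge> 0" "(c1::real) > 0" "c2 > 0"
  shows "supp s0 t1 \<subseteq> supp s0 (\<lambda>i. c1 * t1 i + c2 * t2 i)"
  using assms unfolding supp_def by (auto intro: add_pos_nonneg)

theorem lemma3p8:
  fixes s0 r0 :: nat and nu nu' :: "nat \<Rightarrow> nat \<Rightarrow> nat"
    and alpha beta \<theta>1 \<theta>2 :: "nat \<Rightarrow> real" and \<gamma> c1 c2 :: real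
  assumes "s0 \<ge> 1" and "r0 \<ge> 1"
    and "\<forall>i<s0. alpha i \<ge> 0"
    and "\<forall>i<s0. \<theta>1 i \<ge> 0" and "\<forall>i<s0. \<theta>2 i \<ge> 0"
    and "GammaP s0 r0 nu nu' \<theta>1 \<inter> GammaM s0 r0 nu nu' \<theta>2 = {}
         \<or> GammaM s0 r0 nu nu' \<theta>1 \<inter> GammaP s0 r0 nu nu' \<theta>2 = {}"
    and "c1 > 0" and "c2 > 0"
  shows "(cond32 s0 r0 nu nu' alpha beta \<theta>1 \<gamma> \<and> cond32 s0 r0 nu nu' alpha beta \<theta>2 \<gamma>
            \<longrightarrow> cond32 s0 r0 nu nu' alpha beta (\<lambda>i. c1 * \<theta>1 i + c2 * \<theta>2 i) \<gamma>)
       \<and> (balance s0 r0 nu nu' alpha beta \<theta>1 \<and> balance s0 r0 nu nu' alpha beta \<theta>2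
            \<longrightarrow> balance s0 r0 nu nu' alpha beta (\<lambda>i. c1 * \<theta>1 i + c2 * \<theta>2 i))"
proof -
  define \<theta> where "\<theta> = (\<lambda>i. c1 * \<theta>1 i + c2 * \<theta>2 i)"
  define x1 where "x1 = (\<lambda>k. c1 * drifts s0 nu nu' \<theta>1 k)"
  define x2 where "x2 = (\<lambda>k. c2 * drifts s0 nu nu' \<theta>2 k)"
  have drifts_\<theta>: "drifts s0 nu nu' \<theta> = (\<lambda>k. x1 k + x2 k)"
    unfolding \<theta>_def x1_def x2_def by (rule drifts_comb)
  have disj: "posset {..<r0} x1 \<inter> negset {..<r0} x2 = {} \<or> negset {..<r0} x1 \<inter> posset {..<r0} x2 = {}"
    using assms(6-8)
    by (simp add: x1_def x2_def posset_scale negset_scale GammaP_posset GammaM_negset)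
  have supp_le: "emax (supp s0 \<theta>1) alpha \<le> emax (supp s0 \<theta>) alpha"
    "emax (supp s0 \<theta>2) alpha \<le> emax (supp s0 \<theta>) alpha"
    using supp_comb[OF assms(4,5,7,8)] supp_comb[OF assms(5,4,8,7)]
    by (auto intro: emax_mono simp: \<theta>_def add.commute)
  show ?thesis
    unfolding \<theta>_def[symmetric] cond32_cond_at balance_balanced drifts_\<theta>
    using cond_add[OF disj _ _ supp_le] balanced_add[OF disj] assms(7,8)
    by (simp add: x1_def x2_def cond_at_scale balanced_scale)
qed

end
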